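(* Let $S\subseteq(0,1)$ be open, $f:S\to(0,1)$ differentiable, and consider a (possibly randomized) Bernoulli factory for $f$ that is fast. Then for every $p\in S$, $$\mathbb E[N]\ \ge\ (f'(p))^2\,\frac{p(1-p)}{f(p)(1-f(p))}.$$
   Context: Let $X=(X_i)$ be i.i.d. Bernoulli with parameter $p\in S$ and $U=(U_i)$ i.i.d. uniform on $(0,1)$, independent of $X$. A (possibly randomized) Bernoulli factory for $f$ consists of measurable stopping functions $\tau_i(x_1,u_1;\dots;x_i,u_i)\in\{0,1\}$ and measurable output functions $\gamma_n(x_1,u_1;\dots;x_n,u_n)\in\{0,1\}$; $N=\min\{i:\tau_i(X_1,U_1;\dots;X_i,U_i)=1\}$ is assumed finite almost surely, and the output $Y=\gamma_N(X_1,U_1;\dots;X_N,U_N)$ satisfies $\Pr[Y=1]=f(p)$ for all $p\in S$. The factory is fast if for every $p\in S$ there exist $A>0$, $\beta<1$ with $\Pr[N>n]\le A\beta^n$ for all $n$. *)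

theory Defs
  imports "HOL-Probability.Probability"
begin

text \<open>Sample points: omega i = (X_{i+1}, U_{i+1}), i.e. index i (from 0) holds the (i+1)-th
  Bernoulli/uniform pair.\<close>

definition bf_space :: "real \<Rightarrow> (nat \<Rightarrow> bool \<times> real) measure" where
  "bf_space p = PiM UNIV (\<lambda>_. measure_pmf (bernoulli_pmf p) \<Otimes>\<^sub>M uniform_measure lborel {0<..<(1::real)})"

definition prefix_space :: "nat \<Rightarrow> (nat \<Rightarrow> bool \<times> real) measure" where
  "prefix_space i = PiM {..<i} (\<lambda>_. count_space UNIV \<Otimes>\<^sub>M (borel :: real measure))"

definition stop_time :: "(nat \<Rightarrow> (nat \<Rightarrow> bool \<times> real) \<Rightarrow> bool) \<Rightarrow> (nat \<Rightarrow> bool \<times> real) \<Rightarrow> enat" where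
  "stop_time \<tau> \<omega> =
     (if \<exists>i\<ge>1. \<tau> i (restrict \<omega> {..<i})
      then enat (LEAST i. i \<ge> 1 \<and> \<tau> i (restrict \<omega> {..<i}))
      else \<infinity>)"

definition bernoulli_factory ::
  "real set \<Rightarrow> (real \<Rightarrow> real) \<Rightarrow> (nat \<Rightarrow> (nat \<Rightarrow> bool \<times> real) \<Rightarrow> bool)
     \<Rightarrow> (nat \<Rightarrow> (nat \<Rightarrow> bool \<times> real) \<Rightarrow> bool) \<Rightarrow> bool" where
  "bernoulli_factory S f \<tau> \<gamma> \<longleftrightarrow>
     (\<forall>i. \<tau> i \<in> prefix_space i \<rightarrow>\<^sub>M count_space UNIV) \<and>
     (\<forall>n. \<gamma> n \<in> prefix_space n \<rightarrow>\<^sub>M count_space UNIV) \<and>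
     (\<forall>p\<in>S. AE \<omega> in bf_space p. stop_time \<tau> \<omega> \<noteq> \<infinity>) \<and>
     (\<forall>p\<in>S. measure (bf_space p)
         {\<omega> \<in> space (bf_space p). \<exists>n. stop_time \<tau> \<omega> = enat n \<and> \<gamma> n (restrict \<omega> {..<n})} = f p)"

definition fast_factory :: "real set \<Rightarrow> (nat \<Rightarrow> (nat \<Rightarrow> bool \<times> real) \<Rightarrow> bool) \<Rightarrow> bool" where
  "fast_factory S \<tau> \<longleftrightarrow>
     (\<forall>p\<in>S. \<exists>A>0. \<exists>\<beta><1. \<forall>n::nat.
        measure (bf_space p) {\<omega> \<in> space (bf_space p). stop_time \<tau> \<omega> > enat n} \<le> A * \<beta> ^ n)"

end

theory Submission
  imports Defs
begin

text \<open>Write \<open>G q\<close> for the likelihood ratio, against the parameter \<open>p\<close>, of the sample observed up to the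
  stopping time \<open>N\<close>, and \<open>A\<close> for the indicator of the output \<open>1\<close>. Changing measure at the stopping time
  gives \<open>E\<^sub>p[G q] = 1\<close> and \<open>E\<^sub>p[A \<cdot> G q] = f q\<close>, so \<open>f q - f p\<close> is the covariance of \<open>A\<close> and \<open>G q\<close>
  under \<open>p\<close>, and Cauchy--Schwarz gives \<open>(f q - f p)\<^sup>2 \<le> f p (1 - f p) (E\<^sub>p[(G q)\<^sup>2] - 1)\<close>.
  The square \<open>(G q)\<^sup>2\<close> is \<open>c\<^sup>N\<close> times the likelihood ratio of a tilted parameter \<open>q'\<close>, where
  \<open>c = 1 + (q - p)\<^sup>2 / (p (1 - p))\<close>; hence \<open>E\<^sub>p[(G q)\<^sup>2] = E\<^bsub>q'\<^esub>[c\<^sup>N] \<le> 1 + (c - 1) E\<^sub>p[N (G q)\<^sup>2]\<close>,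
  using \<open>c\<^sup>n \<le> 1 + (c - 1) n c\<^sup>n\<close>. Dividing by \<open>(q - p)\<^sup>2\<close> and letting \<open>q \<rightarrow> p\<close> gives the claim;
  dominated convergence applies because a fast factory has exponentially small tails.\<close>

lemma Cauchy_Schwarz_integral:
  fixes X Y :: "'a \<Rightarrow> real"
  assumes [measurable]: "X \<in> borel_measurable M" "Y \<in> borel_measurable M"
    and iX: "integrable M (\<lambda>x. X x ^ 2)" and iY: "integrable M (\<lambda>x. Y x ^ 2)" and iXY: "integrable M (\<lambda>x. X x * Y x)"
  shows "(\<integral>x. X x * Y x \<partial>M)\<^sup>2 \<le> (\<integral>x. X x ^ 2 \<partial>M) * (\<integral>x. Y x ^ 2 \<partial>M)"
proof -
  have iabs: "integrable M (\<lambda>x. \<bar>X x\<bar> * \<bar>Y x\<bar>)"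
    using integrable_abs[OF iXY] by (simp add: abs_mult)
  have "(\<integral>\<^sup>+x. ennreal \<bar>X x\<bar> * ennreal \<bar>Y x\<bar> \<partial>M)\<^sup>2 \<le>
        (\<integral>\<^sup>+x. ennreal \<bar>X x\<bar> ^ 2 \<partial>M) * (\<integral>\<^sup>+x. ennreal \<bar>Y x\<bar> ^ 2 \<partial>M)"
    by (rule Cauchy_Schwarz_nn_integral) auto
  also have "(\<integral>\<^sup>+x. ennreal \<bar>X x\<bar> ^ 2 \<partial>M) = ennreal (\<integral>x. X x ^ 2 \<partial>M)"
    by (subst nn_integral_eq_integral[OF iX, symmetric]) (auto simp: ennreal_power intro!: nn_integral_cong)
  also have "(\<integral>\<^sup>+x. ennreal \<bar>Y x\<bar> ^ 2 \<partial>M) = ennreal (\<integral>x. Y x ^ 2 \<partial>M)"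
    by (subst nn_integral_eq_integral[OF iY, symmetric]) (auto simp: ennreal_power intro!: nn_integral_cong)
  also have "(\<integral>\<^sup>+x. ennreal \<bar>X x\<bar> * ennreal \<bar>Y x\<bar> \<partial>M) = ennreal (\<integral>x. \<bar>X x\<bar> * \<bar>Y x\<bar> \<partial>M)"
    by (subst nn_integral_eq_integral[OF iabs, symmetric]) (auto simp: ennreal_mult[symmetric] intro!: nn_integral_cong)
  finally have "(\<integral>x. \<bar>X x\<bar> * \<bar>Y x\<bar> \<partial>M)\<^sup>2 \<le> (\<integral>x. X x ^ 2 \<partial>M) * (\<integral>x. Y x ^ 2 \<partial>M)"
    by (simp add: ennreal_power ennreal_mult[symmetric] integral_nonneg_AE)
  moreover have "\<bar>\<integral>x. X x * Y x \<partial>M\<bar>^2 \<le> (\<integral>x. \<bar>X x\<bar> * \<bar>Y x\<bar> \<partial>M)^2"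
    using integral_abs_bound[of M "\<lambda>x. X x * Y x"] by (intro power_mono) (simp_all add: abs_mult)
  ultimately show ?thesis by simp
qed

lemma (in prob_space) covariance_indicator_density_le:
  fixes A G :: "'a \<Rightarrow> real"
  assumes [measurable]: "A \<in> borel_measurable M" "G \<in> borel_measurable M"
    and A01: "\<And>x. A x = 0 \<or> A x = 1"
    and iG: "integrable M G" and iG2: "integrable M (\<lambda>x. G x ^ 2)" and EG: "expectation G = 1"
  shows "(expectation (\<lambda>x. A x * G x) - expectation A)\<^sup>2
    \<le> expectation A * (1 - expectation A) * (expectation (\<lambda>x. G x ^ 2) - 1)"
proof -
  define a where "a = expectation A"
  have "norm (A x) \<le> 1" for x using A01[of x] by auto
  then have iA: "integrable M A" by (intro integrable_const_bound[where B=1] AE_I2) auto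
  have "norm (A x * G x) \<le> norm (G x)" for x using A01[of x] by auto
  then have iAG: "integrable M (\<lambda>x. A x * G x)"
    by (intro Bochner_Integration.integrable_bound[OF iG] AE_I2) auto
  have sqA: "(A x - a)\<^sup>2 = (1 - 2 * a) * A x + a\<^sup>2" for x
    using A01[of x] by (auto simp: power2_eq_square algebra_simps)
  have "(\<integral>x. (A x - a) * (G x - 1) \<partial>M) = expectation (\<lambda>x. A x * G x) - a"
    using iA iAG iG EG by (simp add: algebra_simps prob_space a_def)
  moreover have "(\<integral>x. (A x - a)\<^sup>2 \<partial>M) = a * (1 - a)"
  proof -
    have "(\<integral>x. (A x - a)\<^sup>2 \<partial>M) = (1 - 2 * a) * a + a\<^sup>2"
      using iA by (simp add: sqA prob_space flip: a_def)
    then show ?thesis by (simp add: power2_eq_square algebra_simps)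
  qed
  moreover have "(\<integral>x. (G x - 1)\<^sup>2 \<partial>M) = expectation (\<lambda>x. G x ^ 2) - 1"
    using iG iG2 EG by (simp add: power2_diff prob_space)
  moreover have "(\<integral>x. (A x - a) * (G x - 1) \<partial>M)\<^sup>2 \<le> (\<integral>x. (A x - a)\<^sup>2 \<partial>M) * (\<integral>x. (G x - 1)\<^sup>2 \<partial>M)"
  proof (rule Cauchy_Schwarz_integral)
    show "integrable M (\<lambda>x. (A x - a)\<^sup>2)" unfolding sqA using iA by simp
    show "integrable M (\<lambda>x. (G x - 1)\<^sup>2)" using iG iG2 by (simp add: power2_diff)
    show "integrable M (\<lambda>x. (A x - a) * (G x - 1))" using iA iAG iG by (simp add: algebra_simps)
  qed simp_all
  ultimately show ?thesis by (simp add: a_def)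
qed

lemma power_le_1_plus_mult_power:
  fixes c :: real assumes "1 \<le> c" shows "c ^ n \<le> 1 + (c - 1) * n * c ^ n"
proof (induction n)
  case (Suc n)
  have "c ^ Suc n \<le> c * (1 + (c - 1) * n * c ^ n)" using Suc assms by (simp add: mult_left_mono)
  also have "\<dots> = 1 + (c - 1) * 1 + (c - 1) * n * c ^ Suc n" by (simp add: algebra_simps)
  also have "\<dots> \<le> 1 + (c - 1) * c ^ Suc n + (c - 1) * n * c ^ Suc n"
    using assms one_le_power[OF assms, of "Suc n"] by (intro add_mono mult_left_mono) auto
  finally show ?case by (simp add: algebra_simps)
qed simp

lemma summable_of_nat_mult_power:
  fixes x :: real assumes "0 \<le> x" "x < 1" shows "summable (\<lambda>n. real n * x ^ n)"
proof -
  have "summable (\<lambda>n. diffs (\<lambda>_. 1::real) n * x^n)"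
    by (rule termdiff_converges[where K=1]) (use assms in \<open>auto intro: summable_geometric\<close>)
  then have "summable (\<lambda>n. real (Suc n) * x^n)" by (simp add: diffs_def)
  then show ?thesis
    by (rule summable_comparison_test'[of _ 0]) (use assms in \<open>auto intro!: mult_right_mono\<close>)
qed

lemma obtain_sequence_tendsto_in_open:
  fixes p \<eta> :: real
  assumes "open S" "p \<in> S" "0 < \<eta>"
  obtains X where "\<And>k. X k \<in> S" "\<And>k. X k \<noteq> p" "\<And>k. \<bar>X k - p\<bar> \<le> \<eta>" "X \<longlonglongrightarrow> p"
proof -
  obtain e where e: "0 < e" "ball p e \<subseteq> S" using assms openE by blast
  define d where "d = min (e / 2) \<eta>"
  have d: "0 < d" "d < e" "d \<le> \<eta>" using e assms by (auto simp: d_def)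
  define X where "X k = p + d / Suc k" for k
  have "0 < d / Suc k" "d / Suc k \<le> d" for k using d by (simp_all add: divide_le_eq)
  then have dk: "0 < d / Suc k" "d / Suc k < e" "d / Suc k \<le> \<eta>" for k
    using d by (meson order_le_less_trans order_trans)+
  have "(\<lambda>k. d * inverse (real (Suc k))) \<longlonglongrightarrow> 0"
    by (rule tendsto_mult_right_zero[OF LIMSEQ_inverse_real_of_nat])
  then have lim: "X \<longlonglongrightarrow> p"
    unfolding X_def using tendsto_add[OF tendsto_const, of _ 0 sequentially p] by (simp add: divide_inverse)
  show ?thesis
  proof (rule that)
    show "X k \<in> S" for k using dk[of k] e(2) by (auto simp: X_def dist_real_def)
    show "X k \<noteq> p" for k using d(1) by (simp add: X_def)
    show "\<bar>X k - p\<bar> \<le> \<eta>" for k using dk[of k] by (simp add: X_def)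
  qed (rule lim)
qed

definition bf_step :: "real \<Rightarrow> (bool \<times> real) measure" where
  "bf_step p = measure_pmf (bernoulli_pmf p) \<Otimes>\<^sub>M uniform_measure lborel {0<..<(1::real)}"

lemma bf_space_eq_PiM: "bf_space p = PiM UNIV (\<lambda>_. bf_step p)"
  by (simp add: bf_space_def bf_step_def)

lemma prob_space_uniform_unit: "prob_space (uniform_measure lborel {0<..<(1::real)})"
  by (intro prob_space_uniform_measure) auto

lemma prob_space_bf_step: "prob_space (bf_step p)"
  unfolding bf_step_def by (intro prob_space_pair prob_space_measure_pmf prob_space_uniform_unit)

lemma product_prob_space_bf_step: "product_prob_space (\<lambda>_. bf_step p)"
  by (simp add: product_prob_space_def product_sigma_finite_def prob_space_bf_step
      prob_space_imp_sigma_finite product_prob_space_axioms_def)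

lemma prob_space_bf_space: "prob_space (bf_space p)"
  unfolding bf_space_eq_PiM by (intro prob_space_PiM prob_space_bf_step)

lemma sets_bf_step: "sets (bf_step p) = sets (count_space UNIV \<Otimes>\<^sub>M (borel :: real measure))"
  unfolding bf_step_def by (intro sets_pair_measure_cong) (auto simp: sets_uniform_measure)

lemma sets_PiM_bf_step:
  "sets (PiM I (\<lambda>_. bf_step p)) = sets (PiM I (\<lambda>_. count_space UNIV \<Otimes>\<^sub>M (borel :: real measure)))"
  by (intro sets_PiM_cong) (auto simp: sets_bf_step)

lemma sets_prefix_space: "sets (prefix_space n) = sets (PiM {..<n} (\<lambda>_. bf_step p))"
  by (simp add: sets_PiM_bf_step prefix_space_def)

lemma space_bf_space: "space (bf_space p) = UNIV"
  by (auto simp: bf_space_def space_PiM space_pair_measure PiE_def extensional_def)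

lemma measurable_fst_bf_step [measurable]: "fst \<in> bf_step p \<rightarrow>\<^sub>M count_space UNIV"
  by (subst measurable_cong_sets[OF sets_bf_step refl]) simp

lemma measurable_restrict_bf_space:
  "(\<lambda>\<omega>. restrict \<omega> {..<n}) \<in> bf_space p \<rightarrow>\<^sub>M PiM {..<n} (\<lambda>_. bf_step p)"
  unfolding bf_space_eq_PiM by (rule measurable_restrict_subset) auto

lemma distr_restrict_bf_space:
  "distr (bf_space p) (PiM {..<n} (\<lambda>_. bf_step p)) (\<lambda>\<omega>. restrict \<omega> {..<n}) = PiM {..<n} (\<lambda>_. bf_step p)"
proof -
  interpret product_prob_space "\<lambda>_. bf_step p" UNIV by (rule product_prob_space_bf_step)
  show ?thesis unfolding bf_space_eq_PiM by (rule distr_PiM_restrict_finite) auto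
qed

definition lr :: "real \<Rightarrow> real \<Rightarrow> bool \<Rightarrow> real" where
  "lr q p b = (if b then q / p else (1 - q) / (1 - p))"

definition lr_prod :: "real \<Rightarrow> real \<Rightarrow> nat \<Rightarrow> (nat \<Rightarrow> bool \<times> real) \<Rightarrow> real" where
  "lr_prod q p n \<omega> = (\<Prod>i<n. lr q p (fst (\<omega> i)))"

lemma lr_nonneg: "0 < p \<Longrightarrow> p < 1 \<Longrightarrow> 0 \<le> q \<Longrightarrow> q \<le> 1 \<Longrightarrow> 0 \<le> lr q p b"
  by (auto simp: lr_def)

lemma lr_prod_nonneg: "0 < p \<Longrightarrow> p < 1 \<Longrightarrow> 0 \<le> q \<Longrightarrow> q \<le> 1 \<Longrightarrow> 0 \<le> lr_prod q p n \<omega>"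
  unfolding lr_prod_def by (intro prod_nonneg) (auto simp: lr_nonneg)

lemma lr_self: "0 < p \<Longrightarrow> p < 1 \<Longrightarrow> lr p p b = 1"
  by (simp add: lr_def)

lemma lr_prod_restrict: "lr_prod q p n (restrict \<omega> {..<n}) = lr_prod q p n \<omega>"
  unfolding lr_prod_def by (intro prod.cong) auto

lemma measurable_lr_prod:
  assumes "{..<n} \<subseteq> I"
  shows "lr_prod q p n \<in> borel_measurable (PiM I (\<lambda>_. bf_step r))"
proof -
  have "(\<lambda>\<omega>. lr q p (fst (\<omega> i))) \<in> borel_measurable (PiM I (\<lambda>_. bf_step r))" if "i < n" for i
  proof -
    have "(\<lambda>\<omega>. fst (\<omega> i)) \<in> PiM I (\<lambda>_. bf_step r) \<rightarrow>\<^sub>M count_space UNIV"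
      using that assms by (intro measurable_compose[OF measurable_component_singleton[of i I]
          measurable_fst_bf_step]) auto
    then show ?thesis by measurable
  qed
  then show ?thesis unfolding lr_prod_def[abs_def] by (intro borel_measurable_prod) auto
qed

lemma bernoulli_pmf_density:
  assumes "0 < p" "p < 1" "0 \<le> q" "q \<le> 1"
  shows "measure_pmf (bernoulli_pmf q) = density (measure_pmf (bernoulli_pmf p)) (\<lambda>b. ennreal (lr q p b))"
proof -
  have "density (measure_pmf (bernoulli_pmf p)) (\<lambda>b. ennreal (lr q p b))
       = density (count_space UNIV) (\<lambda>b. ennreal (pmf (bernoulli_pmf p) b) * ennreal (lr q p b))"
    unfolding measure_pmf_eq_density[of "bernoulli_pmf p"] by (subst density_density_eq) auto
  also have "(\<lambda>b. ennreal (pmf (bernoulli_pmf p) b) * ennreal (lr q p b)) = (\<lambda>b. ennreal (pmf (bernoulli_pmf q) b))"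
    using assms by (auto simp: lr_def ennreal_mult'[symmetric] intro!: ext)
  finally show ?thesis by (simp add: measure_pmf_eq_density)
qed

lemma bf_step_density:
  assumes "0 < p" "p < 1" "0 \<le> q" "q \<le> 1"
  shows "bf_step q = density (bf_step p) (\<lambda>x. ennreal (lr q p (fst x)))"
proof -
  interpret U: prob_space "uniform_measure lborel {0<..<(1::real)}" by (rule prob_space_uniform_unit)
  have "bf_step q = density (measure_pmf (bernoulli_pmf p)) (\<lambda>b. ennreal (lr q p b)) \<Otimes>\<^sub>M
       density (uniform_measure lborel {0<..<(1::real)}) (\<lambda>_. 1)"
    unfolding bf_step_def bernoulli_pmf_density[OF assms] density_1 ..
  also have "\<dots> = density (bf_step p) (\<lambda>(x,y). ennreal (lr q p x) * 1)"
    unfolding bf_step_def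
    by (rule pair_measure_density) (auto simp: density_1 intro: U.sigma_finite_measure_axioms)
  finally show ?thesis by (simp add: case_prod_beta')
qed

lemma PiM_bf_step_density:
  assumes "0 < p" "p < 1" "0 \<le> q" "q \<le> 1"
  shows "PiM {..<n} (\<lambda>_. bf_step q) = density (PiM {..<n} (\<lambda>_. bf_step p)) (lr_prod q p n)"
proof -
  interpret Q: product_prob_space "\<lambda>_. bf_step q" "{..<n}" by (rule product_prob_space_bf_step)
  interpret P: product_prob_space "\<lambda>_. bf_step p" "{..<n}" by (rule product_prob_space_bf_step)
  show ?thesis
  proof (rule Q.PiM_eqI[symmetric])
    show "sets (density (PiM {..<n} (\<lambda>_. bf_step p)) (lr_prod q p n)) = sets (PiM {..<n} (\<lambda>_. bf_step q))"
      by (simp add: sets_PiM_bf_step)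
    fix A assume "\<And>i. i \<in> {..<n} \<Longrightarrow> A i \<in> sets (bf_step q)"
    then have A: "\<And>i. i \<in> {..<n} \<Longrightarrow> A i \<in> sets (bf_step p)" by (simp add: sets_bf_step)
    have L: "(\<lambda>x. ennreal (lr_prod q p n x)) \<in> borel_measurable (PiM {..<n} (\<lambda>_. bf_step p))"
      by (intro measurable_compose[OF measurable_lr_prod measurable_ennreal]) simp
    have "emeasure (density (PiM {..<n} (\<lambda>_. bf_step p)) (lr_prod q p n)) (PiE {..<n} A)
        = (\<integral>\<^sup>+ x. ennreal (lr_prod q p n x) * indicator (PiE {..<n} A) x \<partial>PiM {..<n} (\<lambda>_. bf_step p))"
      using A by (subst emeasure_density[OF L]) (auto intro!: sets_PiM_I_finite)
    also have "\<dots> = (\<integral>\<^sup>+ x. (\<Prod>i<n. ennreal (lr q p (fst (x i))) * indicator (A i) (x i)) \<partial>PiM {..<n} (\<lambda>_. bf_step p))"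
    proof (intro nn_integral_cong)
      fix x assume "x \<in> space (PiM {..<n} (\<lambda>_. bf_step p))"
      then have "indicator (PiE {..<n} A) x = (\<Prod>i<n. indicator (A i) (x i) :: ennreal)"
        by (auto simp: space_PiM indicator_def PiE_def Pi_def prod_zero_iff)
      then show "ennreal (lr_prod q p n x) * indicator (PiE {..<n} A) x =
          (\<Prod>i<n. ennreal (lr q p (fst (x i))) * indicator (A i) (x i))"
        using assms by (simp add: lr_prod_def prod_ennreal[symmetric] lr_nonneg prod.distrib)
    qed
    also have "\<dots> = (\<Prod>i<n. \<integral>\<^sup>+ y. ennreal (lr q p (fst y)) * indicator (A i) y \<partial>bf_step p)"
      using A by (intro P.product_nn_integral_prod) auto
    also have "\<dots> = (\<Prod>i<n. emeasure (bf_step q) (A i))"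
      using A by (intro prod.cong refl) (simp add: bf_step_density[OF assms] emeasure_density)
    finally show "emeasure (density (PiM {..<n} (\<lambda>_. bf_step p)) (lr_prod q p n)) (PiE {..<n} A)
        = (\<Prod>i<n. emeasure (bf_step q) (A i))" .
  qed simp
qed

lemma nn_integral_prefix_change_param:
  assumes "0 < p" "p < 1" "0 \<le> q" "q \<le> 1"
    and g: "g \<in> borel_measurable (PiM {..<n} (\<lambda>_. bf_step p))"
  shows "(\<integral>\<^sup>+\<omega>. g (restrict \<omega> {..<n}) \<partial>bf_space q) =
         (\<integral>\<^sup>+\<omega>. g (restrict \<omega> {..<n}) * lr_prod q p n \<omega> \<partial>bf_space p)"
proof -
  have L: "lr_prod q p n \<in> borel_measurable (PiM {..<n} (\<lambda>_. bf_step p))"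
    by (rule measurable_lr_prod) simp
  have "(\<integral>\<^sup>+\<omega>. g (restrict \<omega> {..<n}) \<partial>bf_space q) = (\<integral>\<^sup>+x. g x \<partial>PiM {..<n} (\<lambda>_. bf_step q))"
    using g by (subst distr_restrict_bf_space[symmetric], subst nn_integral_distr)
      (auto intro: measurable_restrict_bf_space simp: measurable_cong_sets[OF sets_PiM_bf_step refl])
  also have "\<dots> = (\<integral>\<^sup>+x. lr_prod q p n x * g x \<partial>PiM {..<n} (\<lambda>_. bf_step p))"
    unfolding PiM_bf_step_density[OF assms(1-4)] by (rule nn_integral_density[OF _ g]) (use L in simp)
  also have "\<dots> = (\<integral>\<^sup>+\<omega>. lr_prod q p n (restrict \<omega> {..<n}) * g (restrict \<omega> {..<n}) \<partial>bf_space p)"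
    using g L by (subst distr_restrict_bf_space[symmetric], subst nn_integral_distr)
      (auto intro: measurable_restrict_bf_space)
  finally show ?thesis by (simp only: lr_prod_restrict mult.commute)
qed

text \<open>\<open>lr_sq_mean q p\<close> is the mean of \<open>(lr q p)\<^sup>2\<close> under \<open>p\<close>; normalising \<open>(lr q p)\<^sup>2\<close> by it
  gives again a likelihood ratio, namely that of \<open>tilt q p\<close>.\<close>

definition lr_sq_mean :: "real \<Rightarrow> real \<Rightarrow> real" where
  "lr_sq_mean q p = q^2 / p + (1 - q)^2 / (1 - p)"

definition tilt :: "real \<Rightarrow> real \<Rightarrow> real" where
  "tilt q p = q^2 / (p * lr_sq_mean q p)"

lemma lr_sq_mean_minus_1: "0 < p \<Longrightarrow> p < 1 \<Longrightarrow> lr_sq_mean q p - 1 = (q - p)^2 / (p * (1 - p))"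
  by (simp add: lr_sq_mean_def field_simps) (simp add: power2_eq_square algebra_simps)

lemma one_le_lr_sq_mean: "0 < p \<Longrightarrow> p < 1 \<Longrightarrow> 1 \<le> lr_sq_mean q p"
proof -
  assume "0 < p" "p < 1"
  then have "0 \<le> (q - p)^2 / (p * (1 - p))" by (intro divide_nonneg_pos) auto
  with lr_sq_mean_minus_1[of p q] \<open>0 < p\<close> \<open>p < 1\<close> show ?thesis by linarith
qed

lemma lr_tilt:
  assumes "0 < p" "p < 1"
  shows "lr_sq_mean q p * lr (tilt q p) p b = (lr q p b)^2"
proof -
  have c: "lr_sq_mean q p > 0" using one_le_lr_sq_mean[OF assms, of q] by simp
  have "1 - tilt q p = (p * lr_sq_mean q p - q^2) / (p * lr_sq_mean q p)"
    using c assms by (simp add: tilt_def field_simps)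
  also have "p * lr_sq_mean q p - q^2 = p * (1 - q)^2 / (1 - p)"
    using assms by (simp add: lr_sq_mean_def field_simps)
  also have "p * (1 - q)^2 / (1 - p) / (p * lr_sq_mean q p) = (1 - q)^2 / ((1 - p) * lr_sq_mean q p)"
    using assms by simp
  finally have "1 - tilt q p = (1 - q)^2 / ((1 - p) * lr_sq_mean q p)" .
  then show ?thesis
    using c assms by (cases b) (simp_all add: lr_def tilt_def power2_eq_square)
qed

lemma lr_prod_tilt:
  assumes "0 < p" "p < 1"
  shows "lr_sq_mean q p ^ n * lr_prod (tilt q p) p n \<omega> = (lr_prod q p n \<omega>)^2"
proof -
  have "lr_sq_mean q p ^ n * lr_prod (tilt q p) p n \<omega> = (\<Prod>i<n. lr_sq_mean q p * lr (tilt q p) p (fst (\<omega> i)))"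
    by (simp add: lr_prod_def prod.distrib)
  then show ?thesis by (simp add: lr_tilt[OF assms] lr_prod_def prod_power_distrib)
qed

lemma tendsto_tilt:
  assumes "X \<longlonglongrightarrow> p" "0 < p" "p < 1"
  shows "(\<lambda>k. tilt (X k) p) \<longlonglongrightarrow> p"
proof -
  have c: "p^2 / p + (1 - p)^2 / (1 - p) = 1" using assms by (simp add: power2_eq_square)
  have "(\<lambda>k. tilt (X k) p) \<longlonglongrightarrow> p^2 / (p * (p^2 / p + (1 - p)^2 / (1 - p)))"
    unfolding tilt_def lr_sq_mean_def using assms c by (intro tendsto_intros) auto
  then show ?thesis using assms c by (simp add: power2_eq_square)
qed

lemma tendsto_lr:
  assumes "X \<longlonglongrightarrow> p" "0 < p" "p < 1"
  shows "(\<lambda>k. lr (X k) p b) \<longlonglongrightarrow> 1"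
proof -
  have "(\<lambda>k. lr (X k) p b) \<longlonglongrightarrow> lr p p b"
    unfolding lr_def using assms by (cases b) (auto intro!: tendsto_eq_intros)
  then show ?thesis using assms by (simp add: lr_self)
qed

lemma lr_prod_le_power:
  assumes "0 < p" "p < 1" "0 \<le> q" "q \<le> 1" "1 \<le> r" "\<bar>q - p\<bar> \<le> (r - 1) * min p (1 - p)"
  shows "lr_prod q p n \<omega> \<le> r ^ n"
proof -
  have "(r - 1) * min p (1 - p) \<le> (r - 1) * p" "(r - 1) * min p (1 - p) \<le> (r - 1) * (1 - p)"
    using assms by (intro mult_left_mono; simp)+
  then have "q \<le> r * p" "1 - q \<le> r * (1 - p)" using assms by (auto simp: algebra_simps)
  then have "lr q p b \<le> r" for b using assms by (simp add: lr_def divide_le_eq)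
  then show ?thesis
    unfolding lr_prod_def using assms prod_mono[of "{..<n}" "\<lambda>i. lr q p (fst (\<omega> i))" "\<lambda>_. r"]
    by (simp add: lr_nonneg)
qed

locale stopping_rule =
  fixes \<tau> :: "nat \<Rightarrow> (nat \<Rightarrow> bool \<times> real) \<Rightarrow> bool"
  assumes measurable_\<tau>: "\<And>i. \<tau> i \<in> prefix_space i \<rightarrow>\<^sub>M count_space UNIV"
begin

lemma pred_\<tau>: "Measurable.pred (PiM {..<i} (\<lambda>_. bf_step p)) (\<tau> i)"
  using measurable_\<tau>[of i] by (subst measurable_cong_sets[OF sets_prefix_space[symmetric] refl])

definition stops_at :: "nat \<Rightarrow> (nat \<Rightarrow> bool \<times> real) \<Rightarrow> bool" where
  "stops_at n x \<longleftrightarrow> 1 \<le> n \<and> \<tau> n x \<and> (\<forall>i\<in>{1..<n}. \<not> \<tau> i (restrict x {..<i}))"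

lemma stop_time_eq_enat_iff: "stop_time \<tau> \<omega> = enat n \<longleftrightarrow> stops_at n (restrict \<omega> {..<n})"
proof -
  have restrict_prefix: "restrict (restrict \<omega> {..<n}) {..<i} = restrict \<omega> {..<i}" if "i \<le> n" for i
    using that by (simp add: Int_absorb1)
  let ?P = "\<lambda>i. 1 \<le> i \<and> \<tau> i (restrict \<omega> {..<i})"
  have "stops_at n (restrict \<omega> {..<n}) \<longleftrightarrow> ?P n \<and> (\<forall>i<n. \<not> ?P i)"
    by (auto simp: stops_at_def restrict_prefix simp del: restrict_restrict)
  also have "\<dots> \<longleftrightarrow> (\<exists>i. ?P i) \<and> (LEAST i. ?P i) = n"
  proof
    assume "?P n \<and> (\<forall>i<n. \<not> ?P i)"
    then show "(\<exists>i. ?P i) \<and> (LEAST i. ?P i) = n"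
      by (auto intro!: Least_equality simp: not_less[symmetric])
  next
    assume "(\<exists>i. ?P i) \<and> (LEAST i. ?P i) = n"
    then show "?P n \<and> (\<forall>i<n. \<not> ?P i)"
      using LeastI_ex[of ?P] not_less_Least[of _ ?P] by blast
  qed
  also have "\<dots> \<longleftrightarrow> stop_time \<tau> \<omega> = enat n"
    by (auto simp: stop_time_def)
  finally show ?thesis ..
qed

lemma pred_stops_at: "Measurable.pred (PiM {..<n} (\<lambda>_. bf_step p)) (stops_at n)"
proof -
  have "Measurable.pred (PiM {..<n} (\<lambda>_. bf_step p)) (\<lambda>x. \<tau> i (restrict x {..<i}))" if "i < n" for i
    using that by (intro measurable_compose[OF measurable_restrict_subset pred_\<tau>]) auto
  then have "Measurable.pred (PiM {..<n} (\<lambda>_. bf_step p)) (\<lambda>x. \<forall>i\<in>{1..<n}. \<not> \<tau> i (restrict x {..<i}))"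
    by (intro pred_intros_finite pred_intros_logic(3)) auto
  with pred_\<tau> show ?thesis
    unfolding stops_at_def by (intro pred_intros_conj1' pred_intros_logic(3))
qed

lemma sets_stop_time_eq_enat: "{\<omega>. stop_time \<tau> \<omega> = enat n} \<in> sets (bf_space p)"
proof -
  have "Measurable.pred (bf_space p) (\<lambda>\<omega>. stops_at n (restrict \<omega> {..<n}))"
    by (rule measurable_compose[OF measurable_restrict_bf_space pred_stops_at])
  then show ?thesis by (simp add: stop_time_eq_enat_iff pred_def space_bf_space)
qed

lemma measurable_stop_time: "stop_time \<tau> \<in> bf_space p \<rightarrow>\<^sub>M count_space UNIV"
proof (subst measurable_count_space_eq2_countable, intro conjI ballI)
  fix a :: enat
  show "stop_time \<tau> -` {a} \<inter> space (bf_space p) \<in> sets (bf_space p)"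
  proof (cases a)
    case (enat n)
    then show ?thesis using sets_stop_time_eq_enat[of n p] by (simp add: space_bf_space vimage_def)
  next
    case infinity
    then have "stop_time \<tau> -` {a} \<inter> space (bf_space p) = space (bf_space p) - (\<Union>n. {\<omega>. stop_time \<tau> \<omega> = enat n})"
      by (auto simp: space_bf_space)
    also have "\<dots> \<in> sets (bf_space p)"
      using sets_stop_time_eq_enat by (intro sets.Diff sets.countable_UN) auto
    finally show ?thesis .
  qed
qed auto

text \<open>The junk value \<open>0\<close> where the rule never stops is irrelevant: it is only ever used almost surely.\<close>

definition stop_index :: "(nat \<Rightarrow> bool \<times> real) \<Rightarrow> nat" where
  "stop_index \<omega> = (case stop_time \<tau> \<omega> of enat n \<Rightarrow> n | \<infinity> \<Rightarrow> 0)"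

lemma measurable_stop_index: "stop_index \<in> bf_space p \<rightarrow>\<^sub>M count_space UNIV"
  unfolding stop_index_def[abs_def] by (rule measurable_compose[OF measurable_stop_time]) simp

lemma measurable_fun_stop_index [measurable]:
  "(\<lambda>\<omega>. g (stop_index \<omega>) :: 'b::topological_space) \<in> borel_measurable (bf_space p)"
  by (rule measurable_compose[OF measurable_stop_index]) simp

text \<open>The value of \<open>\<phi>\<close> at the stopping time, written as a series over the possible stopping times
  so that each term only depends on a prefix of fixed length.\<close>

definition stopped ::
    "(nat \<Rightarrow> (nat \<Rightarrow> bool \<times> real) \<Rightarrow> ennreal) \<Rightarrow> (nat \<Rightarrow> bool \<times> real) \<Rightarrow> ennreal" where
  "stopped \<phi> \<omega> = (\<Sum>m. if stops_at m (restrict \<omega> {..<m}) then \<phi> m (restrict \<omega> {..<m}) else 0)"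

lemma stopped_eq:
  assumes "stop_time \<tau> \<omega> \<noteq> \<infinity>"
  shows "stopped \<phi> \<omega> = \<phi> (stop_index \<omega>) (restrict \<omega> {..<stop_index \<omega>})"
proof -
  obtain n where n: "stop_time \<tau> \<omega> = enat n" using assms by auto
  have "stopped \<phi> \<omega> = (\<Sum>m\<in>{n}. if stops_at m (restrict \<omega> {..<m}) then \<phi> m (restrict \<omega> {..<m}) else 0)"
    unfolding stopped_def using n by (intro suminf_finite) (auto simp: stop_time_eq_enat_iff[symmetric])
  then show ?thesis using n by (simp add: stop_index_def stop_time_eq_enat_iff[symmetric])
qed

lemma nn_integral_stopped:
  assumes "\<And>m. \<phi> m \<in> borel_measurable (PiM {..<m} (\<lambda>_. bf_step p))"
  shows "(\<integral>\<^sup>+\<omega>. stopped \<phi> \<omega> \<partial>bf_space p) =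
    (\<Sum>m. \<integral>\<^sup>+\<omega>. (if stops_at m (restrict \<omega> {..<m}) then \<phi> m (restrict \<omega> {..<m}) else 0) \<partial>bf_space p)"
proof -
  have "(\<lambda>x. if stops_at m x then \<phi> m x else 0) \<in> borel_measurable (PiM {..<m} (\<lambda>_. bf_step p))" for m
    by (intro measurable_If assms pred_stops_at[unfolded pred_def]) simp
  then show ?thesis
    unfolding stopped_def by (intro nn_integral_suminf measurable_compose[OF measurable_restrict_bf_space])
qed

lemma nn_integral_stopped_change_param:
  assumes "0 < p" "p < 1" "0 \<le> q" "q \<le> 1"
    and \<phi>: "\<And>m. \<phi> m \<in> borel_measurable (PiM {..<m} (\<lambda>_. bf_step p))"
  shows "(\<integral>\<^sup>+\<omega>. stopped \<phi> \<omega> \<partial>bf_space q) =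
         (\<integral>\<^sup>+\<omega>. stopped (\<lambda>m x. \<phi> m x * lr_prod q p m x) \<omega> \<partial>bf_space p)"
proof -
  have \<phi>q: "\<phi> m \<in> borel_measurable (PiM {..<m} (\<lambda>_. bf_step q))" for m
    using \<phi>[of m] by (simp add: measurable_cong_sets[OF sets_PiM_bf_step refl])
  have L: "lr_prod q p m \<in> borel_measurable (PiM {..<m} (\<lambda>_. bf_step p))" for m
    by (rule measurable_lr_prod) simp
  have "(\<integral>\<^sup>+\<omega>. stopped \<phi> \<omega> \<partial>bf_space q) =
    (\<Sum>m. \<integral>\<^sup>+\<omega>. (if stops_at m (restrict \<omega> {..<m}) then \<phi> m (restrict \<omega> {..<m}) else 0) \<partial>bf_space q)"
    by (rule nn_integral_stopped[OF \<phi>q])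
  also have "\<dots> = (\<Sum>m. \<integral>\<^sup>+\<omega>. (if stops_at m (restrict \<omega> {..<m}) then \<phi> m (restrict \<omega> {..<m}) else 0)
      * lr_prod q p m \<omega> \<partial>bf_space p)"
    using \<phi> by (intro suminf_cong nn_integral_prefix_change_param[OF assms(1-4)] measurable_If
        pred_stops_at[unfolded pred_def]) simp_all
  also have "\<dots> = (\<integral>\<^sup>+\<omega>. stopped (\<lambda>m x. \<phi> m x * lr_prod q p m x) \<omega> \<partial>bf_space p)"
    using \<phi> L by (subst nn_integral_stopped) (auto simp: lr_prod_restrict intro!: suminf_cong nn_integral_cong)
  finally show ?thesis .
qed

lemma nn_integral_stop_index_change_param:
  assumes "0 < p" "p < 1" "0 \<le> q" "q \<le> 1"
    and finite_p: "AE \<omega> in bf_space p. stop_time \<tau> \<omega> \<noteq> \<infinity>"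
    and finite_q: "AE \<omega> in bf_space q. stop_time \<tau> \<omega> \<noteq> \<infinity>"
    and \<phi>: "\<And>m. \<phi> m \<in> borel_measurable (PiM {..<m} (\<lambda>_. bf_step p))"
  shows "(\<integral>\<^sup>+\<omega>. \<phi> (stop_index \<omega>) (restrict \<omega> {..<stop_index \<omega>}) \<partial>bf_space q) =
         (\<integral>\<^sup>+\<omega>. \<phi> (stop_index \<omega>) (restrict \<omega> {..<stop_index \<omega>}) * lr_prod q p (stop_index \<omega>) \<omega> \<partial>bf_space p)"
proof -
  have "(\<integral>\<^sup>+\<omega>. \<phi> (stop_index \<omega>) (restrict \<omega> {..<stop_index \<omega>}) \<partial>bf_space q) =
      (\<integral>\<^sup>+\<omega>. stopped \<phi> \<omega> \<partial>bf_space q)"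
    using finite_q by (intro nn_integral_cong_AE) (auto simp: stopped_eq)
  also have "\<dots> = (\<integral>\<^sup>+\<omega>. stopped (\<lambda>m x. \<phi> m x * lr_prod q p m x) \<omega> \<partial>bf_space p)"
    by (rule nn_integral_stopped_change_param[OF assms(1-4) \<phi>])
  also have "\<dots> = (\<integral>\<^sup>+\<omega>. \<phi> (stop_index \<omega>) (restrict \<omega> {..<stop_index \<omega>}) * lr_prod q p (stop_index \<omega>) \<omega> \<partial>bf_space p)"
    using finite_p by (intro nn_integral_cong_AE) (auto simp: stopped_eq lr_prod_restrict)
  finally show ?thesis .
qed

lemma nn_integral_fun_stop_index:
  assumes "AE \<omega> in bf_space p. stop_time \<tau> \<omega> \<noteq> \<infinity>"
  shows "(\<integral>\<^sup>+\<omega>. g (stop_index \<omega>) \<partial>bf_space p) = (\<Sum>m. g m * emeasure (bf_space p) {\<omega>. stop_time \<tau> \<omega> = enat m})"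
proof -
  have "(\<integral>\<^sup>+\<omega>. g (stop_index \<omega>) \<partial>bf_space p) = (\<integral>\<^sup>+\<omega>. stopped (\<lambda>m _. g m) \<omega> \<partial>bf_space p)"
    using assms by (intro nn_integral_cong_AE) (auto simp: stopped_eq)
  also have "\<dots> = (\<Sum>m. \<integral>\<^sup>+\<omega>. g m * indicator {\<omega>. stop_time \<tau> \<omega> = enat m} \<omega> \<partial>bf_space p)"
    by (subst nn_integral_stopped) (auto simp: stop_time_eq_enat_iff indicator_def intro!: suminf_cong nn_integral_cong)
  also have "\<dots> = (\<Sum>m. g m * emeasure (bf_space p) {\<omega>. stop_time \<tau> \<omega> = enat m})"
    using sets_stop_time_eq_enat by (simp add: nn_integral_cmult_indicator)
  finally show ?thesis .
qed

lemma stop_time_eq_enat_le_geometric: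
  assumes tail: "\<forall>n. measure (bf_space p) {\<omega> \<in> space (bf_space p). stop_time \<tau> \<omega> > enat n} \<le> A * \<beta> ^ n"
    and "0 < A" "\<beta> < 1"
  obtains b where "0 < b" "b < 1" "\<And>m. measure (bf_space p) {\<omega>. stop_time \<tau> \<omega> = enat m} \<le> A / b * b ^ m"
proof -
  interpret prob_space "bf_space p" by (rule prob_space_bf_space)
  have "0 \<le> A * \<beta>" using tail[rule_format, of 1] measure_nonneg[of "bf_space p"] by (smt (verit) power_one_right)
  then have "0 \<le> \<beta>" using \<open>0 < A\<close> by (simp add: zero_le_mult_iff)
  define b where "b = max \<beta> (1/2)"
  have b: "0 < b" "b < 1" "\<beta> \<le> b" using \<open>\<beta> < 1\<close> by (auto simp: b_def)
  have "measure (bf_space p) {\<omega>. stop_time \<tau> \<omega> = enat m} \<le> A / b * b ^ m" for m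
  proof (cases m)
    case 0
    then have "{\<omega>. stop_time \<tau> \<omega> = enat m} = {}" by (auto simp: stop_time_eq_enat_iff stops_at_def)
    then show ?thesis using \<open>0 < A\<close> b by simp
  next
    case (Suc k)
    have "{\<omega>. stop_time \<tau> \<omega> = enat m} \<subseteq> {\<omega> \<in> space (bf_space p). enat k < stop_time \<tau> \<omega>}"
      by (auto simp: Suc space_bf_space)
    moreover have "Measurable.pred (bf_space p) (\<lambda>\<omega>. enat k < stop_time \<tau> \<omega>)"
      by (rule measurable_compose[OF measurable_stop_time]) simp
    then have "{\<omega> \<in> space (bf_space p). enat k < stop_time \<tau> \<omega>} \<in> sets (bf_space p)"
      by (simp only: pred_def)
    ultimately have "measure (bf_space p) {\<omega>. stop_time \<tau> \<omega> = enat m}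
        \<le> measure (bf_space p) {\<omega> \<in> space (bf_space p). enat k < stop_time \<tau> \<omega>}"
      by (rule finite_measure_mono)
    also have "\<dots> \<le> A * \<beta> ^ k" using tail by simp
    also have "\<dots> \<le> A * b ^ k" using \<open>0 < A\<close> b \<open>0 \<le> \<beta>\<close> by (intro mult_left_mono power_mono) auto
    also have "\<dots> = A / b * b ^ m" using b by (simp add: Suc)
    finally show ?thesis .
  qed
  with b that show ?thesis by blast
qed

lemma integrable_stop_index_mult_power:
  assumes "AE \<omega> in bf_space p. stop_time \<tau> \<omega> \<noteq> \<infinity>"
    and geom: "\<And>m. measure (bf_space p) {\<omega>. stop_time \<tau> \<omega> = enat m} \<le> K * b ^ m"
    and "0 \<le> K" "0 \<le> b" "0 \<le> s" "s * b < 1"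
  shows "integrable (bf_space p) (\<lambda>\<omega>. real (stop_index \<omega>) * s ^ stop_index \<omega>)"
proof (rule integrableI_nonneg)
  interpret prob_space "bf_space p" by (rule prob_space_bf_space)
  have "(\<integral>\<^sup>+\<omega>. ennreal (real (stop_index \<omega>) * s ^ stop_index \<omega>) \<partial>bf_space p) =
      (\<Sum>m. ennreal (real m * s ^ m) * emeasure (bf_space p) {\<omega>. stop_time \<tau> \<omega> = enat m})"
    by (rule nn_integral_fun_stop_index[OF assms(1)])
  also have "\<dots> \<le> (\<Sum>m. ennreal (K * (real m * (s * b) ^ m)))"
  proof (intro suminf_le summableI)
    fix m
    have "ennreal (real m * s ^ m) * emeasure (bf_space p) {\<omega>. stop_time \<tau> \<omega> = enat m} \<le> ennreal (real m * s ^ m) * ennreal (K * b ^ m)"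
      using geom[of m] by (intro mult_left_mono) (auto simp: emeasure_eq_measure intro!: ennreal_leI)
    also have "\<dots> = ennreal (K * (real m * (s * b) ^ m))"
      using assms by (subst ennreal_mult[symmetric]) (auto simp: power_mult_distrib algebra_simps)
    finally show "ennreal (real m * s ^ m) * emeasure (bf_space p) {\<omega>. stop_time \<tau> \<omega> = enat m} \<le> \<dots>" .
  qed
  also have "\<dots> = ennreal (\<Sum>m. K * (real m * (s * b) ^ m))"
    using assms summable_of_nat_mult_power[of "s * b"] by (intro suminf_ennreal2) (auto intro: summable_mult)
  also have "\<dots> < \<infinity>" by simp
  finally show "(\<integral>\<^sup>+\<omega>. ennreal (real (stop_index \<omega>) * s ^ stop_index \<omega>) \<partial>bf_space p) < \<infinity>" .
qed (use assms in auto)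

end

locale factory =
  fixes S :: "real set" and f :: "real \<Rightarrow> real" and \<tau> \<gamma> :: "nat \<Rightarrow> (nat \<Rightarrow> bool \<times> real) \<Rightarrow> bool"
  assumes factory: "bernoulli_factory S f \<tau> \<gamma>"
    and S_subset: "S \<subseteq> {0<..<1}"

sublocale factory \<subseteq> stopping_rule \<tau>
  using factory by unfold_locales (simp add: bernoulli_factory_def)

context factory
begin

lemma in_S_bounds: "p \<in> S \<Longrightarrow> 0 < p" "p \<in> S \<Longrightarrow> p < 1"
  using S_subset by auto

lemma AE_stop_time_finite: "p \<in> S \<Longrightarrow> AE \<omega> in bf_space p. stop_time \<tau> \<omega> \<noteq> \<infinity>"
  using factory by (simp add: bernoulli_factory_def)

lemma pred_\<gamma>: "Measurable.pred (PiM {..<n} (\<lambda>_. bf_step p)) (\<gamma> n)"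
  using factory by (subst measurable_cong_sets[OF sets_prefix_space[symmetric] refl])
    (simp add: bernoulli_factory_def)

definition accepts :: "(nat \<Rightarrow> bool \<times> real) \<Rightarrow> bool" where
  "accepts \<omega> \<longleftrightarrow> \<gamma> (stop_index \<omega>) (restrict \<omega> {..<stop_index \<omega>})"

definition lr_stopped :: "real \<Rightarrow> real \<Rightarrow> (nat \<Rightarrow> bool \<times> real) \<Rightarrow> real" where
  "lr_stopped q p \<omega> = lr_prod q p (stop_index \<omega>) \<omega>"

lemma pred_accepts [measurable]: "Measurable.pred (bf_space p) accepts"
  unfolding accepts_def[abs_def]
  by (rule measurable_compose_countable'[OF measurable_compose[OF measurable_restrict_bf_space pred_\<gamma>]
        measurable_stop_index]) auto

lemma measurable_lr_stopped [measurable]: "lr_stopped q p \<in> borel_measurable (bf_space r)"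
  unfolding lr_stopped_def[abs_def] bf_space_eq_PiM
  by (rule measurable_compose_countable'[OF measurable_lr_prod measurable_stop_index[unfolded bf_space_eq_PiM]]) auto

lemma lr_stopped_nonneg: "p \<in> S \<Longrightarrow> q \<in> S \<Longrightarrow> 0 \<le> lr_stopped q p \<omega>"
  using in_S_bounds[of p] in_S_bounds[of q] by (simp add: lr_stopped_def lr_prod_nonneg)

lemma nn_integral_change_param_in_S:
  assumes "p \<in> S" "q \<in> S" and \<phi>: "\<And>m. \<phi> m \<in> borel_measurable (PiM {..<m} (\<lambda>_. bf_step p))"
  shows "(\<integral>\<^sup>+\<omega>. \<phi> (stop_index \<omega>) (restrict \<omega> {..<stop_index \<omega>}) \<partial>bf_space q) =
         (\<integral>\<^sup>+\<omega>. \<phi> (stop_index \<omega>) (restrict \<omega> {..<stop_index \<omega>}) * lr_stopped q p \<omega> \<partial>bf_space p)"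
  unfolding lr_stopped_def using assms in_S_bounds
  by (intro nn_integral_stop_index_change_param AE_stop_time_finite \<phi>) (auto simp: less_imp_le)

lemma nn_integral_accepts:
  assumes "p \<in> S"
  shows "(\<integral>\<^sup>+\<omega>. ennreal (of_bool (accepts \<omega>)) \<partial>bf_space p) = ennreal (f p)"
proof -
  interpret prob_space "bf_space p" by (rule prob_space_bf_space)
  define A where "A = {\<omega> \<in> space (bf_space p). \<exists>n. stop_time \<tau> \<omega> = enat n \<and> \<gamma> n (restrict \<omega> {..<n})}"
  have A_eq: "A = {\<omega>. stop_time \<tau> \<omega> \<noteq> \<infinity>} \<inter> {\<omega>. accepts \<omega>}"
    by (auto simp: A_def accepts_def stop_index_def space_bf_space)
  have "Measurable.pred (bf_space p) (\<lambda>\<omega>. stop_time \<tau> \<omega> \<noteq> \<infinity>)"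
    by (rule measurable_compose[OF measurable_stop_time]) simp
  then have A: "A \<in> sets (bf_space p)"
    unfolding A_eq using pred_accepts[of p] by (intro sets.Int) (simp_all add: pred_def space_bf_space)
  have "(\<integral>\<^sup>+\<omega>. ennreal (of_bool (accepts \<omega>)) \<partial>bf_space p) = (\<integral>\<^sup>+\<omega>. indicator A \<omega> \<partial>bf_space p)"
    using AE_stop_time_finite[OF assms] by (intro nn_integral_cong_AE) (auto simp: A_eq)
  also have "\<dots> = ennreal (measure (bf_space p) A)"
    using A by (simp add: emeasure_eq_measure)
  also have "measure (bf_space p) A = f p"
    using factory assms unfolding bernoulli_factory_def A_def by blast
  finally show ?thesis .
qed

lemma nn_integral_lr_stopped:
  assumes "p \<in> S" "q \<in> S"
  shows "(\<integral>\<^sup>+\<omega>. lr_stopped q p \<omega> \<partial>bf_space p) = 1"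
proof -
  interpret prob_space "bf_space q" by (rule prob_space_bf_space)
  have "(\<integral>\<^sup>+\<omega>. lr_stopped q p \<omega> \<partial>bf_space p) = (\<integral>\<^sup>+\<omega>. 1 \<partial>bf_space q)"
    using nn_integral_change_param_in_S[OF assms, of "\<lambda>_ _. 1"] by simp
  then show ?thesis by (simp add: emeasure_space_1)
qed

lemma nn_integral_accepts_lr_stopped:
  assumes "p \<in> S" "q \<in> S"
  shows "(\<integral>\<^sup>+\<omega>. of_bool (accepts \<omega>) * lr_stopped q p \<omega> \<partial>bf_space p) = ennreal (f q)"
proof -
  have "(\<integral>\<^sup>+\<omega>. of_bool (accepts \<omega>) * lr_stopped q p \<omega> \<partial>bf_space p) =
      (\<integral>\<^sup>+\<omega>. ennreal (of_bool (accepts \<omega>)) * ennreal (lr_stopped q p \<omega>) \<partial>bf_space p)"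
    by (intro nn_integral_cong) (simp add: of_bool_def)
  also have "\<dots> = ennreal (f q)"
    using nn_integral_change_param_in_S[OF assms, of "\<lambda>m x. ennreal (of_bool (\<gamma> m x))"] pred_\<gamma>
    by (simp add: nn_integral_accepts[OF assms(2), symmetric] accepts_def[symmetric])
  finally show ?thesis .
qed

lemma nn_integral_lr_stopped_sq:
  assumes "p \<in> S" "q \<in> S" "tilt q p \<in> S" "\<And>n. 0 \<le> g n"
  shows "(\<integral>\<^sup>+\<omega>. ennreal (g (stop_index \<omega>) * (lr_stopped q p \<omega>)\<^sup>2) \<partial>bf_space p) =
    (\<integral>\<^sup>+\<omega>. ennreal (g (stop_index \<omega>) * lr_sq_mean q p ^ stop_index \<omega>) \<partial>bf_space (tilt q p))"
proof -
  note p = in_S_bounds[OF assms(1)]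
  have c: "0 \<le> lr_sq_mean q p" using one_le_lr_sq_mean[OF p] by (rule order_trans[rotated]) simp
  then have "(\<integral>\<^sup>+\<omega>. ennreal (g (stop_index \<omega>) * lr_sq_mean q p ^ stop_index \<omega>) \<partial>bf_space (tilt q p)) =
    (\<integral>\<^sup>+\<omega>. ennreal (g (stop_index \<omega>) * lr_sq_mean q p ^ stop_index \<omega>) * lr_stopped (tilt q p) p \<omega> \<partial>bf_space p)"
    using nn_integral_change_param_in_S[OF assms(1,3), of "\<lambda>m _. ennreal (g m * lr_sq_mean q p ^ m)"] by simp
  also have "\<dots> = (\<integral>\<^sup>+\<omega>. ennreal (g (stop_index \<omega>) * (lr_stopped q p \<omega>)\<^sup>2) \<partial>bf_space p)"
    using assms(4) c lr_stopped_nonneg[OF assms(1,3)]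
    by (intro nn_integral_cong) (simp add: ennreal_mult'[symmetric] lr_stopped_def lr_prod_tilt[OF p, symmetric] mult.assoc)
  finally show ?thesis ..
qed

lemma nn_integral_lr_stopped_sq_le:
  assumes "p \<in> S" "q \<in> S" "tilt q p \<in> S"
  shows "(\<integral>\<^sup>+\<omega>. ennreal ((lr_stopped q p \<omega>)\<^sup>2) \<partial>bf_space p) \<le>
    1 + ennreal (lr_sq_mean q p - 1) * (\<integral>\<^sup>+\<omega>. ennreal (real (stop_index \<omega>) * (lr_stopped q p \<omega>)\<^sup>2) \<partial>bf_space p)"
proof -
  interpret prob_space "bf_space (tilt q p)" by (rule prob_space_bf_space)
  define c where "c = lr_sq_mean q p"
  have c: "1 \<le> c" unfolding c_def using in_S_bounds[OF assms(1)] by (rule one_le_lr_sq_mean)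
  have "(\<integral>\<^sup>+\<omega>. ennreal ((lr_stopped q p \<omega>)\<^sup>2) \<partial>bf_space p) =
      (\<integral>\<^sup>+\<omega>. ennreal (c ^ stop_index \<omega>) \<partial>bf_space (tilt q p))"
    using nn_integral_lr_stopped_sq[OF assms, of "\<lambda>_. 1"] by (simp add: c_def)
  also have "\<dots> \<le> (\<integral>\<^sup>+\<omega>. 1 + ennreal (c - 1) * ennreal (real (stop_index \<omega>) * c ^ stop_index \<omega>) \<partial>bf_space (tilt q p))"
  proof (intro nn_integral_mono)
    fix \<omega>
    have "ennreal (c ^ stop_index \<omega>) \<le> ennreal (1 + (c - 1) * (real (stop_index \<omega>) * c ^ stop_index \<omega>))"
      using power_le_1_plus_mult_power[OF c] by (intro ennreal_leI) (simp add: mult.assoc)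
    also have "\<dots> = 1 + ennreal ((c - 1) * (real (stop_index \<omega>) * c ^ stop_index \<omega>))"
      using c by (subst ennreal_plus) auto
    also have "\<dots> = 1 + ennreal (c - 1) * ennreal (real (stop_index \<omega>) * c ^ stop_index \<omega>)"
      using c by (subst ennreal_mult) auto
    finally show "ennreal (c ^ stop_index \<omega>) \<le> \<dots>" .
  qed
  also have "\<dots> = 1 + ennreal (c - 1) * (\<integral>\<^sup>+\<omega>. ennreal (real (stop_index \<omega>) * c ^ stop_index \<omega>) \<partial>bf_space (tilt q p))"
    by (subst nn_integral_add) (auto simp: emeasure_space_1 nn_integral_cmult)
  also have "(\<integral>\<^sup>+\<omega>. ennreal (real (stop_index \<omega>) * c ^ stop_index \<omega>) \<partial>bf_space (tilt q p)) =
      (\<integral>\<^sup>+\<omega>. ennreal (real (stop_index \<omega>) * (lr_stopped q p \<omega>)\<^sup>2) \<partial>bf_space p)"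
    using nn_integral_lr_stopped_sq[OF assms, of real] by (simp add: c_def)
  finally show ?thesis by (simp add: c_def)
qed

lemma f_bounds: "p \<in> S \<Longrightarrow> 0 \<le> f p \<and> f p \<le> 1"
  using factory prob_space.prob_le_1[OF prob_space_bf_space]
  by (metis (no_types, lifting) bernoulli_factory_def measure_nonneg)

lemma integral_lr_stopped_sq_le:
  assumes p: "p \<in> S" and q: "q \<in> S" and "tilt q p \<in> S"
    and int: "integrable (bf_space p) (\<lambda>\<omega>. real (stop_index \<omega>) * (lr_stopped q p \<omega>)\<^sup>2)"
  shows "integrable (bf_space p) (\<lambda>\<omega>. (lr_stopped q p \<omega>)\<^sup>2)"
    and "(\<integral>\<omega>. (lr_stopped q p \<omega>)\<^sup>2 \<partial>bf_space p) \<le>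
      1 + (lr_sq_mean q p - 1) * (\<integral>\<omega>. real (stop_index \<omega>) * (lr_stopped q p \<omega>)\<^sup>2 \<partial>bf_space p)"
proof -
  define I where "I = (\<integral>\<omega>. real (stop_index \<omega>) * (lr_stopped q p \<omega>)\<^sup>2 \<partial>bf_space p)"
  define c where "c = lr_sq_mean q p"
  note G0 = lr_stopped_nonneg[OF p q]
  have "1 \<le> c" unfolding c_def using in_S_bounds[OF p] by (rule one_le_lr_sq_mean)
  have "I \<ge> 0" unfolding I_def using G0 by (intro integral_nonneg_AE) auto
  have "(\<integral>\<^sup>+\<omega>. ennreal ((lr_stopped q p \<omega>)\<^sup>2) \<partial>bf_space p) \<le> 1 + ennreal (c - 1) * ennreal I"
    using nn_integral_lr_stopped_sq_le[OF assms(1-3)] nn_integral_eq_integral[OF int] G0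
    by (simp add: I_def c_def)
  also have "\<dots> = ennreal (1 + (c - 1) * I)"
    using \<open>1 \<le> c\<close> \<open>I \<ge> 0\<close> by (subst ennreal_plus) (auto simp: ennreal_mult[symmetric])
  finally have G2: "(\<integral>\<^sup>+\<omega>. ennreal ((lr_stopped q p \<omega>)\<^sup>2) \<partial>bf_space p) \<le> ennreal (1 + (c - 1) * I)" .
  then show iG2: "integrable (bf_space p) (\<lambda>\<omega>. (lr_stopped q p \<omega>)\<^sup>2)"
    using le_less_trans[OF G2 ennreal_less_top] by (intro integrableI_nonneg) auto
  have "ennreal (\<integral>\<omega>. (lr_stopped q p \<omega>)\<^sup>2 \<partial>bf_space p) \<le> ennreal (1 + (c - 1) * I)"
    using G2 nn_integral_eq_integral[OF iG2] by simp
  then show "(\<integral>\<omega>. (lr_stopped q p \<omega>)\<^sup>2 \<partial>bf_space p) \<le> 1 + (lr_sq_mean q p - 1) * I"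
    using \<open>1 \<le> c\<close> \<open>I \<ge> 0\<close> by (subst (asm) ennreal_le_iff) (auto simp: c_def)
qed

lemma diff_quotient_sq_le_integral_stop_index:
  assumes p: "p \<in> S" and q: "q \<in> S" and "tilt q p \<in> S" "q \<noteq> p"
    and int: "integrable (bf_space p) (\<lambda>\<omega>. real (stop_index \<omega>) * (lr_stopped q p \<omega>)\<^sup>2)"
  shows "((f q - f p) / (q - p))\<^sup>2 \<le> f p * (1 - f p) / (p * (1 - p)) *
    (\<integral>\<omega>. real (stop_index \<omega>) * (lr_stopped q p \<omega>)\<^sup>2 \<partial>bf_space p)"
proof -
  interpret prob_space "bf_space p" by (rule prob_space_bf_space)
  define G where "G = lr_stopped q p"
  note G0 = lr_stopped_nonneg[OF p q, folded G_def]
  note G2 = integral_lr_stopped_sq_le[OF assms(1-3) int, folded G_def]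
  have hG: "has_bochner_integral (bf_space p) G 1"
    using nn_integral_lr_stopped[OF p q] G0 by (intro has_bochner_integral_nn_integral) (auto simp: G_def)
  have hAG: "has_bochner_integral (bf_space p) (\<lambda>\<omega>. of_bool (accepts \<omega>) * G \<omega>) (f q)"
    using nn_integral_accepts_lr_stopped[OF p q] G0 f_bounds[OF q]
    by (intro has_bochner_integral_nn_integral) (auto simp: G_def)
  have hA: "has_bochner_integral (bf_space p) (\<lambda>\<omega>. of_bool (accepts \<omega>)) (f p)"
    using nn_integral_accepts[OF p] f_bounds[OF p] by (intro has_bochner_integral_nn_integral) auto
  have "(f q - f p)\<^sup>2 \<le> f p * (1 - f p) * (expectation (\<lambda>\<omega>. (G \<omega>)\<^sup>2) - 1)"
    using covariance_indicator_density_le[of "\<lambda>\<omega>. of_bool (accepts \<omega>)" G] hG hAG hA G2(1)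
    by (simp add: has_bochner_integral_iff G_def)
  also have "\<dots> \<le> f p * (1 - f p) * ((lr_sq_mean q p - 1) * (\<integral>\<omega>. real (stop_index \<omega>) * (G \<omega>)\<^sup>2 \<partial>bf_space p))"
    using G2(2) f_bounds[OF p] by (intro mult_left_mono) auto
  finally show ?thesis
    using in_S_bounds[OF p] \<open>q \<noteq> p\<close>
    by (simp add: G_def lr_sq_mean_minus_1 power_divide divide_le_eq field_simps)
qed

lemma tendsto_integral_stop_index_lr_stopped_sq:
  assumes p: "p \<in> S" and X: "\<And>k. X k \<in> S" "X \<longlonglongrightarrow> p"
    and r: "1 \<le> r" "\<And>k. \<bar>X k - p\<bar> \<le> (r - 1) * min p (1 - p)"
    and w: "integrable (bf_space p) (\<lambda>\<omega>. real (stop_index \<omega>) * (r\<^sup>2) ^ stop_index \<omega>)"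
  shows "integrable (bf_space p) (\<lambda>\<omega>. real (stop_index \<omega>) * (lr_stopped (X k) p \<omega>)\<^sup>2)"
    and "integrable (bf_space p) (\<lambda>\<omega>. real (stop_index \<omega>))"
    and "(\<lambda>k. \<integral>\<omega>. real (stop_index \<omega>) * (lr_stopped (X k) p \<omega>)\<^sup>2 \<partial>bf_space p)
          \<longlonglongrightarrow> (\<integral>\<omega>. real (stop_index \<omega>) \<partial>bf_space p)"
proof -
  note p01 = in_S_bounds[OF p]
  have bound: "norm (real (stop_index \<omega>) * (lr_stopped (X k) p \<omega>)\<^sup>2) \<le> real (stop_index \<omega>) * (r\<^sup>2) ^ stop_index \<omega>" for k \<omega>
  proof -
    have "0 \<le> lr_stopped (X k) p \<omega>" "lr_stopped (X k) p \<omega> \<le> r ^ stop_index \<omega>"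
      using p01 in_S_bounds[OF X(1)[of k]] r(1) r(2)[of k]
      by (auto simp: lr_stopped_def intro!: lr_prod_nonneg lr_prod_le_power)
    then have "(lr_stopped (X k) p \<omega>)\<^sup>2 \<le> (r ^ stop_index \<omega>)\<^sup>2"
      by (intro power_mono)
    also have "\<dots> = (r\<^sup>2) ^ stop_index \<omega>"
      by (simp add: power_mult[symmetric] mult.commute)
    finally have "(lr_stopped (X k) p \<omega>)\<^sup>2 \<le> (r\<^sup>2) ^ stop_index \<omega>" .
    then show ?thesis by (simp add: mult_left_mono)
  qed
  have lim: "(\<lambda>k. real (stop_index \<omega>) * (lr_stopped (X k) p \<omega>)\<^sup>2) \<longlonglongrightarrow> real (stop_index \<omega>)" for \<omega>
  proof -
    have "(\<lambda>k. lr_stopped (X k) p \<omega>) \<longlonglongrightarrow> (\<Prod>i<stop_index \<omega>. 1)"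
      unfolding lr_stopped_def lr_prod_def using p01 X(2) by (intro tendsto_prod tendsto_lr)
    then show ?thesis by (auto intro!: tendsto_eq_intros)
  qed
  let ?s = "\<lambda>k \<omega>. real (stop_index \<omega>) * (lr_stopped (X k) p \<omega>)\<^sup>2"
  let ?w = "\<lambda>\<omega>. real (stop_index \<omega>) * (r\<^sup>2) ^ stop_index \<omega>"
  have s: "?s k \<in> borel_measurable (bf_space p)" for k by measurable
  have N: "(\<lambda>\<omega>. real (stop_index \<omega>)) \<in> borel_measurable (bf_space p)" by measurable
  have lim_AE: "AE \<omega> in bf_space p. (\<lambda>k. ?s k \<omega>) \<longlonglongrightarrow> real (stop_index \<omega>)"
    by (rule AE_I2) (rule lim)
  have bound_AE: "AE \<omega> in bf_space p. norm (?s k \<omega>) \<le> ?w \<omega>" for k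
    by (rule AE_I2) (rule bound)
  show "integrable (bf_space p) (?s k)"
    by (rule integrable_dominated_convergence2[OF N s w lim_AE bound_AE])
  show "integrable (bf_space p) (\<lambda>\<omega>. real (stop_index \<omega>))"
    by (rule integrable_dominated_convergence[OF N s w lim_AE bound_AE])
  show "(\<lambda>k. \<integral>\<omega>. ?s k \<omega> \<partial>bf_space p) \<longlonglongrightarrow> (\<integral>\<omega>. real (stop_index \<omega>) \<partial>bf_space p)"
    by (rule integral_dominated_convergence[OF N s w lim_AE bound_AE])
qed

lemma exists_integrable_stop_index_dominator:
  assumes p: "p \<in> S"
    and fast: "\<exists>A>0. \<exists>\<beta><1. \<forall>n::nat. measure (bf_space p) {\<omega> \<in> space (bf_space p). stop_time \<tau> \<omega> > enat n} \<le> A * \<beta> ^ n"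
  obtains r where "1 < r" "integrable (bf_space p) (\<lambda>\<omega>. real (stop_index \<omega>) * (r\<^sup>2) ^ stop_index \<omega>)"
proof -
  obtain A \<beta> where "0 < A" "\<beta> < 1"
    and tail: "\<forall>n::nat. measure (bf_space p) {\<omega> \<in> space (bf_space p). stop_time \<tau> \<omega> > enat n} \<le> A * \<beta> ^ n"
    using fast by blast
  obtain b where b: "0 < b" "b < 1" and geom: "\<And>m. measure (bf_space p) {\<omega>. stop_time \<tau> \<omega> = enat m} \<le> A / b * b ^ m"
    using stop_time_eq_enat_le_geometric[OF tail \<open>0 < A\<close> \<open>\<beta> < 1\<close>] by blast
  define r where "r = sqrt ((1 + 1 / b) / 2)"
  have "1 < (1 + 1 / b) / 2" "(1 + 1 / b) / 2 * b < 1" using b by (simp_all add: field_simps)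
  then have "1 < r" "r\<^sup>2 * b < 1" by (simp_all add: r_def)
  moreover have "integrable (bf_space p) (\<lambda>\<omega>. real (stop_index \<omega>) * (r\<^sup>2) ^ stop_index \<omega>)"
    using \<open>r\<^sup>2 * b < 1\<close> \<open>0 < A\<close> b
    by (intro integrable_stop_index_mult_power[OF AE_stop_time_finite[OF p] geom]) auto
  ultimately show ?thesis using that by blast
qed

lemma nn_integral_stop_time:
  assumes "p \<in> S"
  shows "(\<integral>\<^sup>+\<omega>. ennreal_of_enat (stop_time \<tau> \<omega>) \<partial>bf_space p) =
    (\<integral>\<^sup>+\<omega>. ennreal (real (stop_index \<omega>)) \<partial>bf_space p)"
  using AE_stop_time_finite[OF assms]
  by (intro nn_integral_cong_AE) (auto simp: stop_index_def ennreal_of_nat_eq_real_of_nat)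

lemma deriv_sq_le_expected_stop_time:
  assumes "open S" and p: "p \<in> S" and fp: "0 < f p" "f p < 1" and "f differentiable (at p)"
    and fast: "\<exists>A>0. \<exists>\<beta><1. \<forall>n::nat. measure (bf_space p) {\<omega> \<in> space (bf_space p). stop_time \<tau> \<omega> > enat n} \<le> A * \<beta> ^ n"
  shows "ennreal ((deriv f p)\<^sup>2 * (p * (1 - p)) / (f p * (1 - f p)))
    \<le> (\<integral>\<^sup>+\<omega>. ennreal_of_enat (stop_time \<tau> \<omega>) \<partial>bf_space p)"
proof -
  note p01 = in_S_bounds[OF p]
  define C where "C = f p * (1 - f p) / (p * (1 - p))"
  define I where "I X \<omega> = real (stop_index \<omega>) * (lr_stopped X p \<omega>)\<^sup>2" for X \<omega>
  obtain r where "1 < r" and w: "integrable (bf_space p) (\<lambda>\<omega>. real (stop_index \<omega>) * (r\<^sup>2) ^ stop_index \<omega>)"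
    using exists_integrable_stop_index_dominator[OF p fast] by blast
  obtain X where X: "\<And>k. X k \<in> S" "\<And>k. X k \<noteq> p" "\<And>k. \<bar>X k - p\<bar> \<le> (r - 1) * min p (1 - p)" "X \<longlonglongrightarrow> p"
    using obtain_sequence_tendsto_in_open[OF \<open>open S\<close> p, of "(r - 1) * min p (1 - p)"] \<open>1 < r\<close> p01 by auto
  note dominated = tendsto_integral_stop_index_lr_stopped_sq[OF p X(1) X(4) less_imp_le[OF \<open>1 < r\<close>] X(3) w]
  have "(\<lambda>k. C * (\<integral>\<omega>. I (X k) \<omega> \<partial>bf_space p)) \<longlonglongrightarrow> C * (\<integral>\<omega>. real (stop_index \<omega>) \<partial>bf_space p)"
    using dominated(3) by (intro tendsto_mult tendsto_const) (simp add: I_def)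
  moreover have "DERIV f p :> deriv f p" using \<open>f differentiable (at p)\<close> by (simp add: DERIV_deriv_iff_real_differentiable)
  then have "(\<lambda>k. ((f (X k) - f p) / (X k - p))\<^sup>2) \<longlonglongrightarrow> (deriv f p)\<^sup>2"
    using X by (intro tendsto_power filterlim_compose[OF has_field_derivativeD]) (auto simp: filterlim_at)
  moreover have "eventually (\<lambda>k. ((f (X k) - f p) / (X k - p))\<^sup>2 \<le> C * (\<integral>\<omega>. I (X k) \<omega> \<partial>bf_space p)) sequentially"
    using topological_tendstoD[OF tendsto_tilt[OF X(4) p01] \<open>open S\<close> p]
  proof eventually_elim
    case (elim k)
    show ?case
      using diff_quotient_sq_le_integral_stop_index[OF p X(1) elim X(2) dominated(1)] by (simp add: C_def I_def)
  qed
  ultimately have "(deriv f p)\<^sup>2 \<le> C * (\<integral>\<omega>. real (stop_index \<omega>) \<partial>bf_space p)"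
    by (rule tendsto_le[OF sequentially_bot])
  then have "(deriv f p)\<^sup>2 * (p * (1 - p)) / (f p * (1 - f p)) \<le> (\<integral>\<omega>. real (stop_index \<omega>) \<partial>bf_space p)"
    using p01 fp by (simp add: C_def field_simps)
  also have "\<dots> = enn2real (\<integral>\<^sup>+\<omega>. ennreal_of_enat (stop_time \<tau> \<omega>) \<partial>bf_space p)"
    using dominated(2) by (simp add: nn_integral_stop_time[OF p] nn_integral_eq_integral)
  finally show ?thesis
    using nn_integral_eq_integral[OF dominated(2)] nn_integral_stop_time[OF p]
    by (simp add: ennreal_leI)
qed

end

theorem theorem3:
  fixes S :: "real set" and f :: "real \<Rightarrow> real"
    and \<tau> \<gamma> :: "nat \<Rightarrow> (nat \<Rightarrow> bool \<times> real) \<Rightarrow> bool"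
  assumes "open S" and "S \<subseteq> {0<..<1}"
    and "\<forall>p\<in>S. 0 < f p \<and> f p < 1"
    and "\<forall>p\<in>S. f differentiable (at p)"
    and "bernoulli_factory S f \<tau> \<gamma>"
    and "fast_factory S \<tau>"
  shows "\<forall>p\<in>S. ennreal ((deriv f p)\<^sup>2 * (p * (1 - p)) / (f p * (1 - f p)))
                 \<le> (\<integral>\<^sup>+ \<omega>. ennreal_of_enat (stop_time \<tau> \<omega>) \<partial>bf_space p)"
proof
  fix p assume "p \<in> S"
  interpret factory S f \<tau> \<gamma> using assms(2,5) by unfold_locales
  show "ennreal ((deriv f p)\<^sup>2 * (p * (1 - p)) / (f p * (1 - f p)))
      \<le> (\<integral>\<^sup>+ \<omega>. ennreal_of_enat (stop_time \<tau> \<omega>) \<partial>bf_space p)"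
    using \<open>p \<in> S\<close> assms(1,3,4,6)
    by (intro deriv_sq_le_expected_stop_time) (auto simp: fast_factory_def)
qed

end
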